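(* Let $\mathcal C$ be a Markov category with conditionals. Then every morphism in $\mathcal C$ has an initial dilation.
   Context: A Markov category is a symmetric monoidal category $(\mathcal C,\otimes,I)$ with commutative comonoids $\mathrm{copy}_X\colon X\to X\otimes X$, $\mathrm{del}_X\colon X\to I$ compatible with $\otimes$, with $I$ terminal. For $f\colon A\to X\otimes Y$ write $f_X=(\mathrm{id}_X\otimes\mathrm{del}_Y)\circ f$. A conditional of $f$ given $X$ is a morphism $f_{|X}\colon X\otimes A\to Y$ with $f=(\mathrm{id}_X\otimes f_{|X})\circ(\mathrm{copy}_X\otimes\mathrm{id}_A)\circ(f_X\otimes\mathrm{id}_A)\circ\mathrm{copy}_A$; $\mathcal C$ has conditionals if every such $f$ has a conditional. A dilation of $p\colon A\to X$ is $\pi\colon A\to X\otimes E$ with $(\mathrm{id}_X\otimes\mathrm{del}_E)\circ\pi=p$. For a dilation $\pi\colon A\to X\otimes E$ and $f_1,f_2\colon E\to E'$, these are $\pi$-dilationally equal if for every dilation $\rho\colon A\to X\otimes E\otimes F$ of $\pi$, $(\mathrm{id}_X\otimes f_1\otimes\mathrm{id}_F)\circ\rho=(\mathrm{id}_X\otimes f_2\otimes\mathrm{id}_F)\circ\rho$. A dilation $\pi\colon A\to X\otimes E$ of $p$ is initial if for every dilation $\pi'\colon A\to X\otimes E'$ of $p$ there is $f\colon E\to E'$ with $(\mathrm{id}_X\otimes f)\circ\pi=\pi'$, unique up to $\pi$-dilational equality. *)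

theory Defs
  imports Main
begin

text \<open>Data of a (non-strict) symmetric monoidal category with chosen copy/delete maps.
  Objects are all elements of the type 'o; morphisms are the elements of mArr.
  mComp g f is the composite g after f; mTenM is the tensor on morphisms;
  mAssoc X Y Z : (X*Y)*Z -> X*(Y*Z); mLunit X : I*X -> X; mRunit X : X*I -> X;
  mBraid X Y : X*Y -> Y*X.\<close>

record ('o, 'm) mcat =
  mArr :: "'m set"
  mDom :: "'m \<Rightarrow> 'o"
  mCod :: "'m \<Rightarrow> 'o"
  mComp :: "'m \<Rightarrow> 'm \<Rightarrow> 'm"
  mId :: "'o \<Rightarrow> 'm"
  mTen :: "'o \<Rightarrow> 'o \<Rightarrow> 'o"
  mTenM :: "'m \<Rightarrow> 'm \<Rightarrow> 'm"
  mUnit :: "'o"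
  mAssoc :: "'o \<Rightarrow> 'o \<Rightarrow> 'o \<Rightarrow> 'm"
  mLunit :: "'o \<Rightarrow> 'm"
  mRunit :: "'o \<Rightarrow> 'm"
  mBraid :: "'o \<Rightarrow> 'o \<Rightarrow> 'm"
  mCopy :: "'o \<Rightarrow> 'm"
  mDel :: "'o \<Rightarrow> 'm"

definition hom :: "('o, 'm) mcat \<Rightarrow> 'o \<Rightarrow> 'o \<Rightarrow> 'm set" where
  "hom C A B = {f \<in> mArr C. mDom C f = A \<and> mCod C f = B}"

definition iso_arr :: "('o, 'm) mcat \<Rightarrow> 'm \<Rightarrow> 'o \<Rightarrow> 'o \<Rightarrow> bool" where
  "iso_arr C f A B \<longleftrightarrow> f \<in> hom C A B \<and>
     (\<exists>g \<in> hom C B A. mComp C g f = mId C A \<and> mComp C f g = mId C B)"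

definition inv_arr :: "('o, 'm) mcat \<Rightarrow> 'm \<Rightarrow> 'm" where
  "inv_arr C f = (THE g. g \<in> hom C (mCod C f) (mDom C f) \<and>
      mComp C g f = mId C (mDom C f) \<and> mComp C f g = mId C (mCod C f))"

text \<open>Middle-four interchange (X*Y)*(Z*W) -> (X*Z)*(Y*W), built from associators and braiding.\<close>
definition mid4 :: "('o, 'm) mcat \<Rightarrow> 'o \<Rightarrow> 'o \<Rightarrow> 'o \<Rightarrow> 'o \<Rightarrow> 'm" where
  "mid4 C X Y Z W =
     mComp C (inv_arr C (mAssoc C X Z (mTen C Y W)))
      (mComp C (mTenM C (mId C X)
                  (mComp C (mAssoc C Z Y W)
                    (mComp C (mTenM C (mBraid C Y Z) (mId C W))
                       (inv_arr C (mAssoc C Y Z W)))))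
        (mAssoc C X Y (mTen C Z W)))"

locale markov_category =
  fixes C :: "('o, 'm) mcat"
  assumes id_hom: "\<And>X. mId C X \<in> hom C X X"
    and comp_hom: "\<And>f g A B D. f \<in> hom C A B \<Longrightarrow> g \<in> hom C B D \<Longrightarrow> mComp C g f \<in> hom C A D"
    and comp_id_right: "\<And>f A B. f \<in> hom C A B \<Longrightarrow> mComp C f (mId C A) = f"
    and comp_id_left: "\<And>f A B. f \<in> hom C A B \<Longrightarrow> mComp C (mId C B) f = f"
    and comp_assoc: "\<And>f g h A B D E. f \<in> hom C A B \<Longrightarrow> g \<in> hom C B D \<Longrightarrow> h \<in> hom C D E \<Longrightarrow>
        mComp C h (mComp C g f) = mComp C (mComp C h g) f"
    and ten_hom: "\<And>f g A B D E. f \<in> hom C A B \<Longrightarrow> g \<in> hom C D E \<Longrightarrow>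
        mTenM C f g \<in> hom C (mTen C A D) (mTen C B E)"
    and ten_id: "\<And>A B. mTenM C (mId C A) (mId C B) = mId C (mTen C A B)"
    and ten_comp: "\<And>f f' g g' A B D E F G. f \<in> hom C A B \<Longrightarrow> f' \<in> hom C B D \<Longrightarrow>
        g \<in> hom C E F \<Longrightarrow> g' \<in> hom C F G \<Longrightarrow>
        mTenM C (mComp C f' f) (mComp C g' g) = mComp C (mTenM C f' g') (mTenM C f g)"
    and assoc_iso: "\<And>X Y Z. iso_arr C (mAssoc C X Y Z) (mTen C (mTen C X Y) Z) (mTen C X (mTen C Y Z))"
    and assoc_nat: "\<And>f g h X X' Y Y' Z Z'. f \<in> hom C X X' \<Longrightarrow> g \<in> hom C Y Y' \<Longrightarrow> h \<in> hom C Z Z' \<Longrightarrow>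
        mComp C (mAssoc C X' Y' Z') (mTenM C (mTenM C f g) h)
          = mComp C (mTenM C f (mTenM C g h)) (mAssoc C X Y Z)"
    and lunit_iso: "\<And>X. iso_arr C (mLunit C X) (mTen C (mUnit C) X) X"
    and lunit_nat: "\<And>f X Y. f \<in> hom C X Y \<Longrightarrow>
        mComp C (mLunit C Y) (mTenM C (mId C (mUnit C)) f) = mComp C f (mLunit C X)"
    and runit_iso: "\<And>X. iso_arr C (mRunit C X) (mTen C X (mUnit C)) X"
    and runit_nat: "\<And>f X Y. f \<in> hom C X Y \<Longrightarrow>
        mComp C (mRunit C Y) (mTenM C f (mId C (mUnit C))) = mComp C f (mRunit C X)"
    and triangle: "\<And>X Y. mComp C (mTenM C (mId C X) (mLunit C Y)) (mAssoc C X (mUnit C) Y)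
        = mTenM C (mRunit C X) (mId C Y)"
    and pentagon: "\<And>W X Y Z.
        mComp C (mAssoc C W X (mTen C Y Z)) (mAssoc C (mTen C W X) Y Z)
        = mComp C (mTenM C (mId C W) (mAssoc C X Y Z))
            (mComp C (mAssoc C W (mTen C X Y) Z) (mTenM C (mAssoc C W X Y) (mId C Z)))"
    and braid_hom: "\<And>X Y. mBraid C X Y \<in> hom C (mTen C X Y) (mTen C Y X)"
    and braid_nat: "\<And>f g X X' Y Y'. f \<in> hom C X X' \<Longrightarrow> g \<in> hom C Y Y' \<Longrightarrow>
        mComp C (mBraid C X' Y') (mTenM C f g) = mComp C (mTenM C g f) (mBraid C X Y)"
    and braid_sym: "\<And>X Y. mComp C (mBraid C Y X) (mBraid C X Y) = mId C (mTen C X Y)"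
    and hexagon: "\<And>X Y Z.
        mComp C (mAssoc C Y Z X) (mComp C (mBraid C X (mTen C Y Z)) (mAssoc C X Y Z))
        = mComp C (mTenM C (mId C Y) (mBraid C X Z))
            (mComp C (mAssoc C Y X Z) (mTenM C (mBraid C X Y) (mId C Z)))"
    and copy_hom: "\<And>X. mCopy C X \<in> hom C X (mTen C X X)"
    and del_hom: "\<And>X. mDel C X \<in> hom C X (mUnit C)"
    and counit_left: "\<And>X. mComp C (mLunit C X) (mComp C (mTenM C (mDel C X) (mId C X)) (mCopy C X)) = mId C X"
    and counit_right: "\<And>X. mComp C (mRunit C X) (mComp C (mTenM C (mId C X) (mDel C X)) (mCopy C X)) = mId C X"
    and coassoc: "\<And>X. mComp C (mAssoc C X X X) (mComp C (mTenM C (mCopy C X) (mId C X)) (mCopy C X))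
        = mComp C (mTenM C (mId C X) (mCopy C X)) (mCopy C X)"
    and cocomm: "\<And>X. mComp C (mBraid C X X) (mCopy C X) = mCopy C X"
    and copy_tensor: "\<And>X Y. mCopy C (mTen C X Y) = mComp C (mid4 C X X Y Y) (mTenM C (mCopy C X) (mCopy C Y))"
    and del_tensor: "\<And>X Y. mDel C (mTen C X Y) = mComp C (mLunit C (mUnit C)) (mTenM C (mDel C X) (mDel C Y))"
    and unit_terminal: "\<And>f A. f \<in> hom C A (mUnit C) \<Longrightarrow> f = mDel C A"

definition marg :: "('o, 'm) mcat \<Rightarrow> 'm \<Rightarrow> 'o \<Rightarrow> 'o \<Rightarrow> 'm" where
  "marg C f X Y = mComp C (mRunit C X) (mComp C (mTenM C (mId C X) (mDel C Y)) f)"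

definition conditional :: "('o, 'm) mcat \<Rightarrow> 'm \<Rightarrow> 'o \<Rightarrow> 'o \<Rightarrow> 'o \<Rightarrow> 'm \<Rightarrow> bool" where
  "conditional C f A X Y g \<longleftrightarrow> g \<in> hom C (mTen C X A) Y \<and>
     f = mComp C (mTenM C (mId C X) g)
           (mComp C (mAssoc C X X A)
             (mComp C (mTenM C (mCopy C X) (mId C A))
               (mComp C (mTenM C (marg C f X Y) (mId C A)) (mCopy C A))))"

definition has_conditionals :: "('o, 'm) mcat \<Rightarrow> bool" where
  "has_conditionals C \<longleftrightarrow>
     (\<forall>A X Y f. f \<in> hom C A (mTen C X Y) \<longrightarrow> (\<exists>g. conditional C f A X Y g))"

definition dilation :: "('o, 'm) mcat \<Rightarrow> 'm \<Rightarrow> 'o \<Rightarrow> 'o \<Rightarrow> 'o \<Rightarrow> 'm \<Rightarrow> bool" where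
  "dilation C p A X E \<pi> \<longleftrightarrow> \<pi> \<in> hom C A (mTen C X E) \<and>
     mComp C (mRunit C X) (mComp C (mTenM C (mId C X) (mDel C E)) \<pi>) = p"

definition dil_equal :: "('o, 'm) mcat \<Rightarrow> 'm \<Rightarrow> 'o \<Rightarrow> 'o \<Rightarrow> 'o \<Rightarrow> 'm \<Rightarrow> 'm \<Rightarrow> bool" where
  "dil_equal C \<pi> A X E f1 f2 \<longleftrightarrow>
     (\<forall>F \<rho>. dilation C \<pi> A (mTen C X E) F \<rho> \<longrightarrow>
        mComp C (mTenM C (mTenM C (mId C X) f1) (mId C F)) \<rho>
        = mComp C (mTenM C (mTenM C (mId C X) f2) (mId C F)) \<rho>)"

definition initial_dilation :: "('o, 'm) mcat \<Rightarrow> 'm \<Rightarrow> 'o \<Rightarrow> 'o \<Rightarrow> 'o \<Rightarrow> 'm \<Rightarrow> bool" where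
  "initial_dilation C p A X E \<pi> \<longleftrightarrow> dilation C p A X E \<pi> \<and>
     (\<forall>E' \<pi>'. dilation C p A X E' \<pi>' \<longrightarrow>
        (\<exists>f \<in> hom C E E'. mComp C (mTenM C (mId C X) f) \<pi> = \<pi>' \<and>
           (\<forall>g \<in> hom C E E'. mComp C (mTenM C (mId C X) g) \<pi> = \<pi>' \<longrightarrow>
              dil_equal C \<pi> A X E f g)))"

end

theory Submission
  imports Defs
begin

(*
  The initial dilation of p : A \<rightarrow> X is the input-output dilation
    \<pi> = (copy X \<otimes> id A) \<cdot> (p \<otimes> id A) \<cdot> copy A : A \<rightarrow> X \<otimes> (X \<otimes> A),
  which keeps a copy of both the output and the input.  Every dilation \<pi>' of p factors
  through \<pi> via its conditional given X.  For uniqueness, let g1, g2 both satisfy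
  (id X \<otimes> g) \<cdot> \<pi> = \<pi>' and let \<rho> be a dilation of \<pi>.  A conditional k of \<rho> given X,
  followed by a conditional m of k given its marginal on X \<otimes> A, rewrites
  ((id X \<otimes> g) \<otimes> id F) \<cdot> \<rho> into an expression that depends on g only through
  (id X \<otimes> (g \<otimes> id) \<cdot> copy) \<cdot> \<pi>.  That composite is determined by (id X \<otimes> g) \<cdot> \<pi>,
  because copying X \<otimes> A after \<pi> is the same as copying A before \<pi> and rewiring.
*)

context markov_category begin

abbreviation arr :: "'m \<Rightarrow> bool" where "arr f \<equiv> f \<in> mArr C"
abbreviation src :: "'m \<Rightarrow> 'o" where "src f \<equiv> mDom C f"
abbreviation tgt :: "'m \<Rightarrow> 'o" where "tgt f \<equiv> mCod C f"
abbreviation mcomp :: "'m \<Rightarrow> 'm \<Rightarrow> 'm" (infixr "\<cdot>" 55) where "g \<cdot> f \<equiv> mComp C g f"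
abbreviation mtensor :: "'m \<Rightarrow> 'm \<Rightarrow> 'm" (infixr "\<otimes>" 60) where "f \<otimes> g \<equiv> mTenM C f g"
abbreviation otensor :: "'o \<Rightarrow> 'o \<Rightarrow> 'o" (infixr "\<odot>" 65) where "X \<odot> Y \<equiv> mTen C X Y"
abbreviation idm :: "'o \<Rightarrow> 'm" where "idm X \<equiv> mId C X"
abbreviation \<alpha> :: "'o \<Rightarrow> 'o \<Rightarrow> 'o \<Rightarrow> 'm" where "\<alpha> X Y Z \<equiv> mAssoc C X Y Z"
abbreviation \<alpha>' :: "'o \<Rightarrow> 'o \<Rightarrow> 'o \<Rightarrow> 'm" where "\<alpha>' X Y Z \<equiv> inv_arr C (mAssoc C X Y Z)"
abbreviation \<sigma> :: "'o \<Rightarrow> 'o \<Rightarrow> 'm" where "\<sigma> X Y \<equiv> mBraid C X Y"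
abbreviation copy :: "'o \<Rightarrow> 'm" where "copy X \<equiv> mCopy C X"
abbreviation del :: "'o \<Rightarrow> 'm" where "del X \<equiv> mDel C X"
abbreviation runit :: "'o \<Rightarrow> 'm" where "runit X \<equiv> mRunit C X"
abbreviation lunit :: "'o \<Rightarrow> 'm" where "lunit X \<equiv> mLunit C X"
abbreviation I :: "'o" where "I \<equiv> mUnit C"

lemma hom_iff: "f \<in> hom C A B \<longleftrightarrow> arr f \<and> src f = A \<and> tgt f = B"
  by (simp add: hom_def)

lemma arr_id[simp]: "arr (idm X)" "src (idm X) = X" "tgt (idm X) = X"
  using id_hom[of X] by (auto simp: hom_iff)

lemma arr_comp[simp]: "arr f \<Longrightarrow> arr g \<Longrightarrow> src g = tgt f \<Longrightarrow> arr (g \<cdot> f)"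
  and src_comp[simp]: "arr f \<Longrightarrow> arr g \<Longrightarrow> src g = tgt f \<Longrightarrow> src (g \<cdot> f) = src f"
  and tgt_comp[simp]: "arr f \<Longrightarrow> arr g \<Longrightarrow> src g = tgt f \<Longrightarrow> tgt (g \<cdot> f) = tgt g"
  using comp_hom[of f "src f" "tgt f" g "tgt g"] by (auto simp: hom_iff)

lemma arr_tensor[simp]: "arr f \<Longrightarrow> arr g \<Longrightarrow> arr (f \<otimes> g)"
  and src_tensor[simp]: "arr f \<Longrightarrow> arr g \<Longrightarrow> src (f \<otimes> g) = src f \<odot> src g"
  and tgt_tensor[simp]: "arr f \<Longrightarrow> arr g \<Longrightarrow> tgt (f \<otimes> g) = tgt f \<odot> tgt g"
  using ten_hom[of f "src f" "tgt f" g "src g" "tgt g"] by (auto simp: hom_iff)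

lemma iso_arr_inv:
  assumes "iso_arr C f A B"
  shows "inv_arr C f \<in> hom C B A" "inv_arr C f \<cdot> f = idm A" "f \<cdot> inv_arr C f = idm B"
proof -
  have f: "f \<in> hom C A B" using assms unfolding iso_arr_def by blast
  obtain g where g: "g \<in> hom C B A" "g \<cdot> f = idm A" "f \<cdot> g = idm B"
    using assms unfolding iso_arr_def by blast
  have f_ends: "src f = A" "tgt f = B" using f unfolding hom_iff by blast+
  have inverse_unique: "h = g" if h: "h \<in> hom C B A" "h \<cdot> f = idm A" "f \<cdot> h = idm B" for h
  proof -
    have "h = h \<cdot> idm B" using comp_id_right[OF h(1)] by simp
    also have "\<dots> = h \<cdot> (f \<cdot> g)" using g(3) by simp
    also have "\<dots> = (h \<cdot> f) \<cdot> g" using comp_assoc[OF g(1) f h(1)] by simp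
    also have "\<dots> = g" using h(2) comp_id_left[OF g(1)] by simp
    finally show "h = g" .
  qed
  have "inv_arr C f = g"
    unfolding inv_arr_def f_ends
  proof (rule the_equality)
    show "g \<in> hom C B A \<and> g \<cdot> f = idm A \<and> f \<cdot> g = idm B" using g by blast
    show "\<And>h. h \<in> hom C B A \<and> h \<cdot> f = idm A \<and> f \<cdot> h = idm B \<Longrightarrow> h = g"
      using inverse_unique by blast
  qed
  then show "inv_arr C f \<in> hom C B A" "inv_arr C f \<cdot> f = idm A" "f \<cdot> inv_arr C f = idm B"
    using g by simp_all
qed

lemma arr_assoc[simp]: "arr (\<alpha> X Y Z)" "src (\<alpha> X Y Z) = (X \<odot> Y) \<odot> Z" "tgt (\<alpha> X Y Z) = X \<odot> (Y \<odot> Z)"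
  using assoc_iso[of X Y Z] by (auto simp: iso_arr_def hom_iff)

lemma arr_assoc_inv[simp]: "arr (\<alpha>' X Y Z)" "src (\<alpha>' X Y Z) = X \<odot> (Y \<odot> Z)" "tgt (\<alpha>' X Y Z) = (X \<odot> Y) \<odot> Z"
  using iso_arr_inv(1)[OF assoc_iso[of X Y Z]] by (auto simp: hom_iff)

lemma assoc_inv_assoc: "\<alpha>' X Y Z \<cdot> \<alpha> X Y Z = idm ((X \<odot> Y) \<odot> Z)"
  using iso_arr_inv(2)[OF assoc_iso[of X Y Z]] .

lemma assoc_assoc_inv: "\<alpha> X Y Z \<cdot> \<alpha>' X Y Z = idm (X \<odot> (Y \<odot> Z))"
  using iso_arr_inv(3)[OF assoc_iso[of X Y Z]] .

lemma arr_lunit[simp]: "arr (lunit X)" "src (lunit X) = I \<odot> X" "tgt (lunit X) = X"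
  using lunit_iso[of X] by (auto simp: iso_arr_def hom_iff)

lemma arr_runit[simp]: "arr (runit X)" "src (runit X) = X \<odot> I" "tgt (runit X) = X"
  using runit_iso[of X] by (auto simp: iso_arr_def hom_iff)

lemma arr_braid[simp]: "arr (\<sigma> X Y)" "src (\<sigma> X Y) = X \<odot> Y" "tgt (\<sigma> X Y) = Y \<odot> X"
  using braid_hom[of X Y] by (auto simp: hom_iff)

lemma arr_copy[simp]: "arr (copy X)" "src (copy X) = X" "tgt (copy X) = X \<odot> X"
  using copy_hom[of X] by (auto simp: hom_iff)

lemma arr_del[simp]: "arr (del X)" "src (del X) = X" "tgt (del X) = I"
  using del_hom[of X] by (auto simp: hom_iff)

lemma comp_assoc_arr[simp]: "arr f \<Longrightarrow> arr g \<Longrightarrow> arr h \<Longrightarrow> src g = tgt f \<Longrightarrow> src h = tgt g \<Longrightarrow> (h \<cdot> g) \<cdot> f = h \<cdot> (g \<cdot> f)"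
  using comp_assoc[of f "src f" "tgt f" g "tgt g" h "tgt h"] by (simp add: hom_iff)

lemma comp_arr_id[simp]: "arr f \<Longrightarrow> src f = X \<Longrightarrow> f \<cdot> idm X = f"
  using comp_id_right[of f "src f" "tgt f"] by (simp add: hom_iff)

lemma comp_id_arr[simp]: "arr f \<Longrightarrow> tgt f = X \<Longrightarrow> idm X \<cdot> f = f"
  using comp_id_left[of f "src f" "tgt f"] by (simp add: hom_iff)

declare ten_id[simp]

lemma interchange: "arr f \<Longrightarrow> arr f' \<Longrightarrow> arr g \<Longrightarrow> arr g' \<Longrightarrow> src f' = tgt f \<Longrightarrow> src g' = tgt g \<Longrightarrow>
   (f' \<otimes> g') \<cdot> (f \<otimes> g) = (f' \<cdot> f) \<otimes> (g' \<cdot> g)"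
  using ten_comp[of f "src f" "tgt f" f' "tgt f'" g "src g" "tgt g" g' "tgt g'"] by (simp add: hom_iff)

lemma interchange_comp: "arr f \<Longrightarrow> arr f' \<Longrightarrow> arr g \<Longrightarrow> arr g' \<Longrightarrow> src f' = tgt f \<Longrightarrow> src g' = tgt g \<Longrightarrow> arr k \<Longrightarrow> tgt k = src f \<odot> src g \<Longrightarrow>
   (f' \<otimes> g') \<cdot> ((f \<otimes> g) \<cdot> k) = ((f' \<cdot> f) \<otimes> (g' \<cdot> g)) \<cdot> k"
  by (simp add: interchange[symmetric])

lemmas interchange_simps = interchange interchange_comp

lemma del_comp[simp]: "arr f \<Longrightarrow> tgt f = Y \<Longrightarrow> del Y \<cdot> f = del (src f)"
  using unit_terminal[of "del Y \<cdot> f" "src f"] by (simp add: hom_iff)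

subsection \<open>Coherence\<close>

lemma runit_naturality: "arr f \<Longrightarrow> runit (tgt f) \<cdot> (f \<otimes> idm I) = f \<cdot> runit (src f)"
  using runit_nat[of f "src f" "tgt f"] by (simp add: hom_iff)

lemma assoc_naturality: "arr f \<Longrightarrow> arr g \<Longrightarrow> arr h \<Longrightarrow>
   \<alpha> (tgt f) (tgt g) (tgt h) \<cdot> ((f \<otimes> g) \<otimes> h) = (f \<otimes> (g \<otimes> h)) \<cdot> \<alpha> (src f) (src g) (src h)"
  using assoc_nat[of f "src f" "tgt f" g "src g" "tgt g" h "src h" "tgt h"] by (simp add: hom_iff)

lemma assoc_inv_naturality: "arr f \<Longrightarrow> arr g \<Longrightarrow> arr h \<Longrightarrow>
   \<alpha>' (tgt f) (tgt g) (tgt h) \<cdot> (f \<otimes> (g \<otimes> h)) = ((f \<otimes> g) \<otimes> h) \<cdot> \<alpha>' (src f) (src g) (src h)"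
proof -
  assume a: "arr f" "arr g" "arr h"
  have "\<alpha>' (tgt f) (tgt g) (tgt h) \<cdot> (f \<otimes> (g \<otimes> h)) = \<alpha>' (tgt f) (tgt g) (tgt h) \<cdot> ((f \<otimes> (g \<otimes> h)) \<cdot> (\<alpha> (src f) (src g) (src h) \<cdot> \<alpha>' (src f) (src g) (src h)))"
    using a by (simp add: assoc_assoc_inv)
  also have "\<dots> = \<alpha>' (tgt f) (tgt g) (tgt h) \<cdot> ((\<alpha> (tgt f) (tgt g) (tgt h) \<cdot> ((f \<otimes> g) \<otimes> h)) \<cdot> \<alpha>' (src f) (src g) (src h))"
    using a by (simp add: assoc_naturality)
  also have "\<dots> = ((f \<otimes> g) \<otimes> h) \<cdot> \<alpha>' (src f) (src g) (src h)"
    using a by (simp add: assoc_inv_assoc flip: comp_assoc_arr)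
  finally show ?thesis .
qed

lemma braid_naturality: "arr f \<Longrightarrow> arr g \<Longrightarrow> \<sigma> (tgt f) (tgt g) \<cdot> (f \<otimes> g) = (g \<otimes> f) \<cdot> \<sigma> (src f) (src g)"
  using braid_nat[of f "src f" "tgt f" g "src g" "tgt g"] by (simp add: hom_iff)

abbreviation runit' :: "'o \<Rightarrow> 'm" where "runit' X \<equiv> inv_arr C (mRunit C X)"

lemma arr_runit_inv[simp]: "arr (runit' X)" "src (runit' X) = X" "tgt (runit' X) = X \<odot> I"
  using iso_arr_inv(1)[OF runit_iso[of X]] by (auto simp: hom_iff)

lemma runit_runit_inv: "runit X \<cdot> runit' X = idm X"
  using iso_arr_inv(3)[OF runit_iso[of X]] .

lemma tensor_id_unit_cancel:
  assumes "arr f" "arr g" "src f = W" "src g = W" "tgt f = V" "tgt g = V" "f \<otimes> idm I = g \<otimes> idm I"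
  shows "f = g"
proof -
  have "f \<cdot> runit W = g \<cdot> runit W"
    using runit_naturality[of f] runit_naturality[of g] assms by simp
  then have "(f \<cdot> runit W) \<cdot> runit' W = (g \<cdot> runit W) \<cdot> runit' W" by simp
  then show ?thesis using assms by (simp add: runit_runit_inv)
qed

lemma assoc_cancel:
  assumes "arr f" "arr g" "tgt f = (X \<odot> Y) \<odot> Z" "tgt g = (X \<odot> Y) \<odot> Z" "\<alpha> X Y Z \<cdot> f = \<alpha> X Y Z \<cdot> g"
  shows "f = g"
proof -
  from assms(5) have "\<alpha>' X Y Z \<cdot> (\<alpha> X Y Z \<cdot> f) = \<alpha>' X Y Z \<cdot> (\<alpha> X Y Z \<cdot> g)" by (rule arg_cong)
  then show ?thesis using assms(1-4) by (simp add: assoc_inv_assoc flip: comp_assoc_arr)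
qed

lemma triangle_comp: "arr k \<Longrightarrow> tgt k = (X \<odot> I) \<odot> Y \<Longrightarrow>
  (idm X \<otimes> lunit Y) \<cdot> (\<alpha> X I Y \<cdot> k) = (runit X \<otimes> idm Y) \<cdot> k"
  using triangle[of X Y] by (simp flip: comp_assoc_arr)

(* Kelly: the pentagon at (X, Y, I, I) together with two triangles, after cancelling
   the invertible \<alpha> X Y I and the faithful functor - \<otimes> idm I. *)
lemma runit_tensor: "(idm X \<otimes> runit Y) \<cdot> \<alpha> X Y I = runit (X \<odot> Y)"
proof -
  let ?T = "idm X \<otimes> (idm Y \<otimes> lunit I)"
  have pentagon_XYII: "\<alpha> X Y (I \<odot> I) \<cdot> \<alpha> (X \<odot> Y) I I
      = (idm X \<otimes> \<alpha> Y I I) \<cdot> (\<alpha> X (Y \<odot> I) I \<cdot> (\<alpha> X Y I \<otimes> idm I))"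
    using pentagon[of X Y I I] by simp
  have triangle_XY_I: "?T \<cdot> (\<alpha> X Y (I \<odot> I) \<cdot> \<alpha> (X \<odot> Y) I I) = \<alpha> X Y I \<cdot> (runit (X \<odot> Y) \<otimes> idm I)"
  proof -
    have "?T \<cdot> (\<alpha> X Y (I \<odot> I) \<cdot> \<alpha> (X \<odot> Y) I I) = \<alpha> X Y I \<cdot> ((idm (X \<odot> Y) \<otimes> lunit I) \<cdot> \<alpha> (X \<odot> Y) I I)"
      using assoc_naturality[of "idm X" "idm Y" "lunit I"] by (simp flip: comp_assoc_arr)
    then show ?thesis using triangle[of "X \<odot> Y" I] by simp
  qed
  have triangle_Y_I: "?T \<cdot> ((idm X \<otimes> \<alpha> Y I I) \<cdot> (\<alpha> X (Y \<odot> I) I \<cdot> (\<alpha> X Y I \<otimes> idm I)))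
      = \<alpha> X Y I \<cdot> (((idm X \<otimes> runit Y) \<cdot> \<alpha> X Y I) \<otimes> idm I)"
  proof -
    have "?T \<cdot> ((idm X \<otimes> \<alpha> Y I I) \<cdot> k) = (idm X \<otimes> (runit Y \<otimes> idm I)) \<cdot> k"
      if "arr k" "tgt k = X \<odot> ((Y \<odot> I) \<odot> I)" for k
      using that triangle[of Y I] by (simp add: interchange_simps)
    moreover have "(idm X \<otimes> (runit Y \<otimes> idm I)) \<cdot> (\<alpha> X (Y \<odot> I) I \<cdot> k)
        = \<alpha> X Y I \<cdot> (((idm X \<otimes> runit Y) \<otimes> idm I) \<cdot> k)"
      if "arr k" "tgt k = (X \<odot> (Y \<odot> I)) \<odot> I" for k
      using that assoc_naturality[of "idm X" "runit Y" "idm I"] by (simp flip: comp_assoc_arr)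
    moreover have "((idm X \<otimes> runit Y) \<otimes> idm I) \<cdot> (\<alpha> X Y I \<otimes> idm I) = ((idm X \<otimes> runit Y) \<cdot> \<alpha> X Y I) \<otimes> idm I"
      by (simp add: interchange_simps)
    ultimately show ?thesis by simp
  qed
  have "\<alpha> X Y I \<cdot> (runit (X \<odot> Y) \<otimes> idm I) = \<alpha> X Y I \<cdot> (((idm X \<otimes> runit Y) \<cdot> \<alpha> X Y I) \<otimes> idm I)"
    using triangle_XY_I triangle_Y_I pentagon_XYII by metis
  then have "runit (X \<odot> Y) \<otimes> idm I = ((idm X \<otimes> runit Y) \<cdot> \<alpha> X Y I) \<otimes> idm I"
    by (rule assoc_cancel[rotated 4]) simp_all
  then show ?thesis
    by (rule tensor_id_unit_cancel[rotated 6, symmetric]) simp_all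
qed

lemma assoc_inv_assoc_comp[simp]: "arr k \<Longrightarrow> tgt k = (X \<odot> Y) \<odot> Z \<Longrightarrow> \<alpha>' X Y Z \<cdot> (\<alpha> X Y Z \<cdot> k) = k"
  by (simp add: assoc_inv_assoc flip: comp_assoc_arr)

lemma assoc_assoc_inv_comp[simp]: "arr k \<Longrightarrow> tgt k = X \<odot> (Y \<odot> Z) \<Longrightarrow> \<alpha> X Y Z \<cdot> (\<alpha>' X Y Z \<cdot> k) = k"
  by (simp add: assoc_assoc_inv flip: comp_assoc_arr)

declare assoc_inv_assoc[simp] assoc_assoc_inv[simp]

lemma pentagon_comp: "arr k \<Longrightarrow> tgt k = ((W \<odot> X) \<odot> Y) \<odot> Z \<Longrightarrow>
  \<alpha> W X (Y \<odot> Z) \<cdot> (\<alpha> (W \<odot> X) Y Z \<cdot> k) = (idm W \<otimes> \<alpha> X Y Z) \<cdot> (\<alpha> W (X \<odot> Y) Z \<cdot> ((\<alpha> W X Y \<otimes> idm Z) \<cdot> k))"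
  using pentagon[of W X Y Z] by (simp flip: comp_assoc_arr)

lemma assoc_naturality_comp: "arr f \<Longrightarrow> arr g \<Longrightarrow> arr h \<Longrightarrow> arr k \<Longrightarrow> tgt k = (src f \<odot> src g) \<odot> src h \<Longrightarrow>
   \<alpha> (tgt f) (tgt g) (tgt h) \<cdot> (((f \<otimes> g) \<otimes> h) \<cdot> k) = (f \<otimes> (g \<otimes> h)) \<cdot> (\<alpha> (src f) (src g) (src h) \<cdot> k)"
  using assoc_naturality[of f g h] by (simp flip: comp_assoc_arr)

lemma assoc_inv_naturality_comp: "arr f \<Longrightarrow> arr g \<Longrightarrow> arr h \<Longrightarrow> arr k \<Longrightarrow> tgt k = src f \<odot> (src g \<odot> src h) \<Longrightarrow>
   \<alpha>' (tgt f) (tgt g) (tgt h) \<cdot> ((f \<otimes> (g \<otimes> h)) \<cdot> k) = ((f \<otimes> g) \<otimes> h) \<cdot> (\<alpha>' (src f) (src g) (src h) \<cdot> k)"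
  using assoc_inv_naturality[of f g h] by (simp flip: comp_assoc_arr)

lemma hexagon_comp: "arr k \<Longrightarrow> tgt k = (X \<odot> Y) \<odot> Z \<Longrightarrow>
  \<alpha> Y Z X \<cdot> (\<sigma> X (Y \<odot> Z) \<cdot> (\<alpha> X Y Z \<cdot> k)) = (idm Y \<otimes> \<sigma> X Z) \<cdot> (\<alpha> Y X Z \<cdot> ((\<sigma> X Y \<otimes> idm Z) \<cdot> k))"
  using hexagon[where X=X and Y=Y and Z=Z] by (simp flip: comp_assoc_arr)

lemma mid4_eq:
  "mid4 C U V A B = \<alpha> (U \<odot> A) V B \<cdot> ((\<alpha>' U A V \<otimes> idm B) \<cdot> (((idm U \<otimes> \<sigma> V A) \<otimes> idm B) \<cdot> ((\<alpha> U V A \<otimes> idm B) \<cdot> \<alpha>' (U \<odot> V) A B)))"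
proof -
  have pentagon_UAVB: "\<alpha> (U \<odot> A) V B \<cdot> ((\<alpha>' U A V \<otimes> idm B) \<cdot> k) = \<alpha>' U A (V \<odot> B) \<cdot> ((idm U \<otimes> \<alpha> A V B) \<cdot> (\<alpha> U (A \<odot> V) B \<cdot> k))"
    if "arr k" "tgt k = (U \<odot> (A \<odot> V)) \<odot> B" for k
  proof -
    have inverse_whiskered: "(\<alpha> U A V \<otimes> idm B) \<cdot> ((\<alpha>' U A V \<otimes> idm B) \<cdot> k) = k" using that by (simp add: interchange_simps)
    have "\<alpha>' U A (V \<odot> B) \<cdot> ((idm U \<otimes> \<alpha> A V B) \<cdot> (\<alpha> U (A \<odot> V) B \<cdot> k))
       = \<alpha>' U A (V \<odot> B) \<cdot> ((idm U \<otimes> \<alpha> A V B) \<cdot> (\<alpha> U (A \<odot> V) B \<cdot> ((\<alpha> U A V \<otimes> idm B) \<cdot> ((\<alpha>' U A V \<otimes> idm B) \<cdot> k))))"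
      using that inverse_whiskered by simp
    also have "\<dots> = \<alpha>' U A (V \<odot> B) \<cdot> (\<alpha> U A (V \<odot> B) \<cdot> (\<alpha> (U \<odot> A) V B \<cdot> ((\<alpha>' U A V \<otimes> idm B) \<cdot> k)))"
      using that by (simp add: pentagon_comp)
    also have "\<dots> = \<alpha> (U \<odot> A) V B \<cdot> ((\<alpha>' U A V \<otimes> idm B) \<cdot> k)"
      using that by simp
    finally show ?thesis by simp
  qed
  have braid_natural: "\<alpha> U (A \<odot> V) B \<cdot> (((idm U \<otimes> \<sigma> V A) \<otimes> idm B) \<cdot> k) = (idm U \<otimes> (\<sigma> V A \<otimes> idm B)) \<cdot> (\<alpha> U (V \<odot> A) B \<cdot> k)"
    if "arr k" "tgt k = (U \<odot> (V \<odot> A)) \<odot> B" for k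
    using that assoc_naturality_comp[of "idm U" "\<sigma> V A" "idm B" k] by simp
  have pentagon_UVAB_comp: "\<alpha> U (V \<odot> A) B \<cdot> ((\<alpha> U V A \<otimes> idm B) \<cdot> k) = (idm U \<otimes> \<alpha>' V A B) \<cdot> (\<alpha> U V (A \<odot> B) \<cdot> (\<alpha> (U \<odot> V) A B \<cdot> k))"
    if "arr k" "tgt k = ((U \<odot> V) \<odot> A) \<odot> B" for k
  proof -
    have inverse_whiskered: "(idm U \<otimes> \<alpha>' V A B) \<cdot> ((idm U \<otimes> \<alpha> V A B) \<cdot> k) = k" if "arr k" "tgt k = U \<odot> ((V \<odot> A) \<odot> B)" for k
      using that by (simp add: interchange_simps)
    have "(idm U \<otimes> \<alpha>' V A B) \<cdot> (\<alpha> U V (A \<odot> B) \<cdot> (\<alpha> (U \<odot> V) A B \<cdot> k)) =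
      (idm U \<otimes> \<alpha>' V A B) \<cdot> ((idm U \<otimes> \<alpha> V A B) \<cdot> (\<alpha> U (V \<odot> A) B \<cdot> ((\<alpha> U V A \<otimes> idm B) \<cdot> k)))"
      using that by (simp add: pentagon_comp)
    also have "\<dots> = \<alpha> U (V \<odot> A) B \<cdot> ((\<alpha> U V A \<otimes> idm B) \<cdot> k)"
      using that by (simp add: inverse_whiskered)
    finally show ?thesis by simp
  qed
  have pentagon_UVAB: "\<alpha> U (V \<odot> A) B \<cdot> ((\<alpha> U V A \<otimes> idm B) \<cdot> \<alpha>' (U \<odot> V) A B) = (idm U \<otimes> \<alpha>' V A B) \<cdot> \<alpha> U V (A \<odot> B)"
    using pentagon_UVAB_comp[of "\<alpha>' (U \<odot> V) A B"] by simp
  have fold_id_U: "(idm U \<otimes> \<alpha> A V B) \<cdot> ((idm U \<otimes> (\<sigma> V A \<otimes> idm B)) \<cdot> ((idm U \<otimes> \<alpha>' V A B) \<cdot> k)) =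
           (idm U \<otimes> (\<alpha> A V B \<cdot> ((\<sigma> V A \<otimes> idm B) \<cdot> \<alpha>' V A B))) \<cdot> k" if "arr k" "tgt k = U \<odot> (V \<odot> (A \<odot> B))" for k
    using that by (simp add: interchange_simps)
  show ?thesis unfolding mid4_def
    by (simp add: pentagon_UAVB braid_natural pentagon_UVAB fold_id_U)
qed

subsection \<open>Copying and marginals\<close>

lemma counit_right_comp: "arr k \<Longrightarrow> tgt k = X \<Longrightarrow> runit X \<cdot> ((idm X \<otimes> del X) \<cdot> (copy X \<cdot> k)) = k"
  using counit_right by (simp flip: comp_assoc_arr)

(* (x, y) \<mapsto> (x, (y, x)) *)
abbreviation copy_swap :: "'o \<Rightarrow> 'o \<Rightarrow> 'm" where
  "copy_swap X Y \<equiv> (idm X \<otimes> \<sigma> X Y) \<cdot> (\<alpha> X X Y \<cdot> (copy X \<otimes> idm Y))"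

(* (x, a) \<mapsto> ((x, a), x) *)
abbreviation copy_fst :: "'o \<Rightarrow> 'o \<Rightarrow> 'm" where
  "copy_fst X A \<equiv> \<alpha>' X A X \<cdot> copy_swap X A"

lemma copy_tensor_eq: "copy (X \<odot> A) = \<alpha> (X \<odot> A) X A \<cdot> ((copy_fst X A \<otimes> idm A) \<cdot> (\<alpha>' X A A \<cdot> (idm X \<otimes> copy A)))"
proof -
  have copy_natural: "\<alpha>' (X \<odot> X) A A \<cdot> (copy X \<otimes> copy A) = ((copy X \<otimes> idm A) \<otimes> idm A) \<cdot> (\<alpha>' X A A \<cdot> (idm X \<otimes> copy A))"
  proof -
    have "copy X \<otimes> copy A = (copy X \<otimes> idm (A \<odot> A)) \<cdot> (idm X \<otimes> copy A)" by (simp add: interchange_simps)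
    then have "\<alpha>' (X \<odot> X) A A \<cdot> (copy X \<otimes> copy A) = \<alpha>' (X \<odot> X) A A \<cdot> ((copy X \<otimes> idm (A \<odot> A)) \<cdot> (idm X \<otimes> copy A))" by simp
    also have "\<dots> = ((copy X \<otimes> idm A) \<otimes> idm A) \<cdot> (\<alpha>' X A A \<cdot> (idm X \<otimes> copy A))"
      using assoc_inv_naturality_comp[of "copy X" "idm A" "idm A" "idm X \<otimes> copy A"] by simp
    finally show ?thesis .
  qed
  have fold_id_A: "(\<alpha>' X A X \<otimes> idm A) \<cdot> (((idm X \<otimes> \<sigma> X A) \<otimes> idm A) \<cdot> ((\<alpha> X X A \<otimes> idm A) \<cdot> (((copy X \<otimes> idm A) \<otimes> idm A) \<cdot> k)))
     = (copy_fst X A \<otimes> idm A) \<cdot> k" if "arr k" "tgt k = (X \<odot> A) \<odot> A" for k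
    using that by (simp add: interchange_simps)
  have "copy (X \<odot> A) = mid4 C X X A A \<cdot> (copy X \<otimes> copy A)" by (rule copy_tensor)
  also have "\<dots> = \<alpha> (X \<odot> A) X A \<cdot> ((copy_fst X A \<otimes> idm A) \<cdot> (\<alpha>' X A A \<cdot> (idm X \<otimes> copy A)))"
    by (simp add: mid4_eq copy_natural fold_id_A)
  finally show ?thesis .
qed

lemma braid_copy_eq_copy_fst: "\<sigma> X (X \<odot> A) \<cdot> (\<alpha> X X A \<cdot> (copy X \<otimes> idm A)) = copy_fst X A"
proof -
  have cocomm_A: "(\<sigma> X X \<otimes> idm A) \<cdot> (copy X \<otimes> idm A) = copy X \<otimes> idm A" by (simp add: interchange_simps cocomm)
  have "\<sigma> X (X \<odot> A) \<cdot> (\<alpha> X X A \<cdot> (copy X \<otimes> idm A)) = \<alpha>' X A X \<cdot> (\<alpha> X A X \<cdot> (\<sigma> X (X \<odot> A) \<cdot> (\<alpha> X X A \<cdot> (copy X \<otimes> idm A))))"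
    by simp
  also have "\<dots> = \<alpha>' X A X \<cdot> ((idm X \<otimes> \<sigma> X A) \<cdot> (\<alpha> X X A \<cdot> ((\<sigma> X X \<otimes> idm A) \<cdot> (copy X \<otimes> idm A))))"
    by (simp add: hexagon_comp)
  also have "\<dots> = copy_fst X A" by (simp add: cocomm_A)
  finally show ?thesis .
qed

lemma copy_swap_after_copy: "(idm X \<otimes> \<sigma> X (X \<odot> A)) \<cdot> (\<alpha> X X (X \<odot> A) \<cdot> ((copy X \<otimes> idm (X \<odot> A)) \<cdot> (\<alpha> X X A \<cdot> (copy X \<otimes> idm A))))
  = (idm X \<otimes> copy_fst X A) \<cdot> (\<alpha> X X A \<cdot> (copy X \<otimes> idm A))"
proof -
  have copy_first: "(copy X \<otimes> idm (X \<odot> A)) \<cdot> (\<alpha> X X A \<cdot> k) = \<alpha> (X \<odot> X) X A \<cdot> (((copy X \<otimes> idm X) \<otimes> idm A) \<cdot> k)"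
    if "arr k" "tgt k = (X \<odot> X) \<odot> A" for k
    using that assoc_naturality_comp[of "copy X" "idm X" "idm A" k] by simp
  have coassoc_A: "(\<alpha> X X X \<otimes> idm A) \<cdot> (((copy X \<otimes> idm X) \<otimes> idm A) \<cdot> (copy X \<otimes> idm A)) = ((idm X \<otimes> copy X) \<otimes> idm A) \<cdot> (copy X \<otimes> idm A)"
    by (simp add: interchange_simps coassoc)
  have copy_second: "\<alpha> X (X \<odot> X) A \<cdot> (((idm X \<otimes> copy X) \<otimes> idm A) \<cdot> k) = (idm X \<otimes> (copy X \<otimes> idm A)) \<cdot> (\<alpha> X X A \<cdot> k)"
    if "arr k" "tgt k = (X \<odot> X) \<odot> A" for k
    using that assoc_naturality_comp[of "idm X" "copy X" "idm A" k] by simp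
  have fold_id_X: "(idm X \<otimes> \<sigma> X (X \<odot> A)) \<cdot> ((idm X \<otimes> \<alpha> X X A) \<cdot> ((idm X \<otimes> (copy X \<otimes> idm A)) \<cdot> k)) =
     (idm X \<otimes> (\<sigma> X (X \<odot> A) \<cdot> (\<alpha> X X A \<cdot> (copy X \<otimes> idm A)))) \<cdot> k" if "arr k" "tgt k = X \<odot> X \<odot> A" for k
    using that by (simp add: interchange_simps)
  have "(idm X \<otimes> \<sigma> X (X \<odot> A)) \<cdot> (\<alpha> X X (X \<odot> A) \<cdot> ((copy X \<otimes> idm (X \<odot> A)) \<cdot> (\<alpha> X X A \<cdot> (copy X \<otimes> idm A))))
     = (idm X \<otimes> \<sigma> X (X \<odot> A)) \<cdot> (\<alpha> X X (X \<odot> A) \<cdot> (\<alpha> (X \<odot> X) X A \<cdot> (((copy X \<otimes> idm X) \<otimes> idm A) \<cdot> (copy X \<otimes> idm A))))"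
    by (simp add: copy_first)
  also have "\<dots> = (idm X \<otimes> \<sigma> X (X \<odot> A)) \<cdot> ((idm X \<otimes> \<alpha> X X A) \<cdot> (\<alpha> X (X \<odot> X) A \<cdot> ((\<alpha> X X X \<otimes> idm A) \<cdot> (((copy X \<otimes> idm X) \<otimes> idm A) \<cdot> (copy X \<otimes> idm A)))))"
    by (simp add: pentagon_comp)
  also have "\<dots> = (idm X \<otimes> \<sigma> X (X \<odot> A)) \<cdot> ((idm X \<otimes> \<alpha> X X A) \<cdot> (\<alpha> X (X \<odot> X) A \<cdot> (((idm X \<otimes> copy X) \<otimes> idm A) \<cdot> (copy X \<otimes> idm A))))"
    by (simp only: coassoc_A)
  also have "\<dots> = (idm X \<otimes> \<sigma> X (X \<odot> A)) \<cdot> ((idm X \<otimes> \<alpha> X X A) \<cdot> ((idm X \<otimes> (copy X \<otimes> idm A)) \<cdot> (\<alpha> X X A \<cdot> (copy X \<otimes> idm A))))"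
    by (simp add: copy_second)
  also have "\<dots> = (idm X \<otimes> copy_fst X A) \<cdot> (\<alpha> X X A \<cdot> (copy X \<otimes> idm A))"
    by (simp add: fold_id_X braid_copy_eq_copy_fst)
  finally show ?thesis .
qed

lemma runit_tensor_into_unit: "arr u \<Longrightarrow> arr v \<Longrightarrow> tgt v = I \<Longrightarrow> arr k \<Longrightarrow> tgt k = src u \<odot> src v \<Longrightarrow>
  runit (tgt u) \<cdot> ((u \<otimes> v) \<cdot> k) = u \<cdot> (runit (src u) \<cdot> ((idm (src u) \<otimes> v) \<cdot> k))"
proof -
  assume a: "arr u" "arr v" "tgt v = I" "arr k" "tgt k = src u \<odot> src v"
  have "u \<otimes> v = (u \<otimes> idm I) \<cdot> (idm (src u) \<otimes> v)" using a by (simp add: interchange_simps)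
  then have "runit (tgt u) \<cdot> ((u \<otimes> v) \<cdot> k) = (runit (tgt u) \<cdot> (u \<otimes> idm I)) \<cdot> ((idm (src u) \<otimes> v) \<cdot> k)"
    using a by simp
  also have "\<dots> = (u \<cdot> runit (src u)) \<cdot> ((idm (src u) \<otimes> v) \<cdot> k)" using runit_naturality a by simp
  finally show ?thesis using a by simp
qed

lemma marginal_assoc:
  assumes "arr k" "tgt k = (X \<odot> Y) \<odot> Z"
  shows "runit X \<cdot> ((idm X \<otimes> del (Y \<odot> Z)) \<cdot> (\<alpha> X Y Z \<cdot> k)) =
    runit X \<cdot> ((idm X \<otimes> del Y) \<cdot> (runit (X \<odot> Y) \<cdot> ((idm (X \<odot> Y) \<otimes> del Z) \<cdot> k)))"
proof -
  have del_tensor_comp: "(idm X \<otimes> lunit I) \<cdot> ((idm X \<otimes> (del Y \<otimes> del Z)) \<cdot> (\<alpha> X Y Z \<cdot> k)) = (idm X \<otimes> del (Y \<odot> Z)) \<cdot> (\<alpha> X Y Z \<cdot> k)"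
    using assms by (simp add: interchange_simps del_tensor)
  have del_natural: "(idm X \<otimes> (del Y \<otimes> del Z)) \<cdot> (\<alpha> X Y Z \<cdot> k) = \<alpha> X I I \<cdot> (((idm X \<otimes> del Y) \<otimes> del Z) \<cdot> k)"
    using assoc_naturality[of "idm X" "del Y" "del Z"] assms by (simp flip: comp_assoc_arr)
  have fold_id_I: "runit X \<cdot> ((runit X \<otimes> idm I) \<cdot> (((idm X \<otimes> del Y) \<otimes> del Z) \<cdot> k)) = runit X \<cdot> (((runit X \<cdot> (idm X \<otimes> del Y)) \<otimes> del Z) \<cdot> k)"
    using assms by (simp add: interchange_simps)
  have runit_del: "runit X \<cdot> (((runit X \<cdot> (idm X \<otimes> del Y)) \<otimes> del Z) \<cdot> k) = (runit X \<cdot> (idm X \<otimes> del Y)) \<cdot> (runit (X \<odot> Y) \<cdot> ((idm (X \<odot> Y) \<otimes> del Z) \<cdot> k))"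
    using runit_tensor_into_unit[of "runit X \<cdot> (idm X \<otimes> del Y)" "del Z" k] assms by simp
  show ?thesis
    using assms by (simp add: del_tensor_comp[symmetric] del_natural triangle_comp fold_id_I runit_del)
qed

lemma marginal_tensor:
  assumes "arr u" "arr v" "arr k" "tgt k = src u \<odot> src v" "tgt u = Y" "tgt v = Z"
  shows "runit Y \<cdot> ((idm Y \<otimes> del Z) \<cdot> ((u \<otimes> v) \<cdot> k)) = u \<cdot> (runit (src u) \<cdot> ((idm (src u) \<otimes> del (src v)) \<cdot> k))"
proof -
  have "(idm (tgt u) \<otimes> del (tgt v)) \<cdot> ((u \<otimes> v) \<cdot> k) = (u \<otimes> del (src v)) \<cdot> k"
    using assms by (simp add: interchange_simps)
  moreover have "runit (tgt u) \<cdot> ((u \<otimes> del (src v)) \<cdot> k) = u \<cdot> (runit (src u) \<cdot> ((idm (src u) \<otimes> del (src v)) \<cdot> k))"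
    using runit_tensor_into_unit[of u "del (src v)" k] assms by simp
  ultimately show ?thesis using assms by simp
qed

subsection \<open>The input-output dilation\<close>

abbreviation io_dil :: "'o \<Rightarrow> 'o \<Rightarrow> 'm \<Rightarrow> 'm" where
  "io_dil X A p \<equiv> \<alpha> X X A \<cdot> ((copy X \<otimes> idm A) \<cdot> ((p \<otimes> idm A) \<cdot> copy A))"

abbreviation graph_arr :: "'o \<Rightarrow> 'm \<Rightarrow> 'm" where
  "graph_arr E u \<equiv> (u \<otimes> idm E) \<cdot> copy E"

lemma io_dil_marginal:
  assumes "arr p" "src p = A" "tgt p = X"
  shows "runit X \<cdot> ((idm X \<otimes> del (X \<odot> A)) \<cdot> io_dil X A p) = p"
  using assms by (simp add: marginal_assoc marginal_tensor counit_right counit_right_comp)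

(* ((x, y), a) \<mapsto> (x, (y, (x, a))) *)
abbreviation rewire :: "'o \<Rightarrow> 'o \<Rightarrow> 'o \<Rightarrow> 'm" where
  "rewire X A Y \<equiv> (idm X \<otimes> \<alpha> Y X A) \<cdot> (\<alpha> X (Y \<odot> X) A \<cdot> (copy_swap X Y \<otimes> idm A))"

lemma copy_swap_naturality:
  assumes u: "arr u" "src u = Y" "tgt u = Y'"
  shows "copy_swap X Y' \<cdot> (idm X \<otimes> u) = (idm X \<otimes> (u \<otimes> idm X)) \<cdot> copy_swap X Y"
proof -
  have "(copy X \<otimes> idm Y') \<cdot> (idm X \<otimes> u) = (idm (X \<odot> X) \<otimes> u) \<cdot> (copy X \<otimes> idm Y)"
    using u by (simp add: interchange)
  then have "copy_swap X Y' \<cdot> (idm X \<otimes> u)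
      = (idm X \<otimes> \<sigma> X Y') \<cdot> ((idm X \<otimes> (idm X \<otimes> u)) \<cdot> (\<alpha> X X Y \<cdot> (copy X \<otimes> idm Y)))"
    using u assoc_naturality_comp[of "idm X" "idm X" u "copy X \<otimes> idm Y"] by simp
  also have "\<dots> = (idm X \<otimes> (u \<otimes> idm X)) \<cdot> copy_swap X Y"
    using u braid_naturality[of "idm X" u] by (simp add: interchange_comp)
  finally show ?thesis .
qed

lemma rewire_naturality:
  assumes u: "arr u" "src u = Y" "tgt u = Y'" and k: "arr k" "tgt k = (X \<odot> Y) \<odot> A"
  shows "rewire X A Y' \<cdot> (((idm X \<otimes> u) \<otimes> idm A) \<cdot> k) = (idm X \<otimes> (u \<otimes> idm (X \<odot> A))) \<cdot> (rewire X A Y \<cdot> k)"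
proof -
  have "rewire X A Y' \<cdot> (((idm X \<otimes> u) \<otimes> idm A) \<cdot> k)
      = (idm X \<otimes> \<alpha> Y' X A) \<cdot> (\<alpha> X (Y' \<odot> X) A \<cdot> (((copy_swap X Y' \<cdot> (idm X \<otimes> u)) \<otimes> idm A) \<cdot> k))"
    using u k by (simp add: interchange_simps)
  also have "\<dots> = (idm X \<otimes> \<alpha> Y' X A) \<cdot> (\<alpha> X (Y' \<odot> X) A \<cdot>
      (((idm X \<otimes> (u \<otimes> idm X)) \<otimes> idm A) \<cdot> ((copy_swap X Y \<otimes> idm A) \<cdot> k)))"
    using u k copy_swap_naturality[OF u, of X] by (simp add: interchange_simps)
  also have "\<dots> = (idm X \<otimes> \<alpha> Y' X A) \<cdot> ((idm X \<otimes> ((u \<otimes> idm X) \<otimes> idm A)) \<cdot>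
      (\<alpha> X (Y \<odot> X) A \<cdot> ((copy_swap X Y \<otimes> idm A) \<cdot> k)))"
    using u k assoc_naturality_comp[of "idm X" "u \<otimes> idm X" "idm A" "(copy_swap X Y \<otimes> idm A) \<cdot> k"] by simp
  also have "\<dots> = (idm X \<otimes> (u \<otimes> idm (X \<odot> A))) \<cdot> ((idm X \<otimes> \<alpha> Y X A) \<cdot>
      (\<alpha> X (Y \<odot> X) A \<cdot> ((copy_swap X Y \<otimes> idm A) \<cdot> k)))"
    using u k assoc_naturality[of u "idm X" "idm A"] by (simp add: interchange_comp)
  also have "\<dots> = (idm X \<otimes> (u \<otimes> idm (X \<odot> A))) \<cdot> (rewire X A Y \<cdot> k)"
    using k by (simp add: interchange_simps)
  finally show ?thesis .
qed

lemma rewire_after_copy_fst: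
  assumes k: "arr k" "tgt k = (X \<odot> A) \<odot> A"
  shows "rewire X A (X \<odot> A) \<cdot> (((\<alpha> X X A \<cdot> (copy X \<otimes> idm A)) \<otimes> idm A) \<cdot> k)
    = (idm X \<otimes> \<alpha> (X \<odot> A) X A) \<cdot> ((idm X \<otimes> (copy_fst X A \<otimes> idm A)) \<cdot>
        (\<alpha> X (X \<odot> A) A \<cdot> (((\<alpha> X X A \<cdot> (copy X \<otimes> idm A)) \<otimes> idm A) \<cdot> k)))"
proof -
  have "rewire X A (X \<odot> A) \<cdot> (((\<alpha> X X A \<cdot> (copy X \<otimes> idm A)) \<otimes> idm A) \<cdot> k)
      = (idm X \<otimes> \<alpha> (X \<odot> A) X A) \<cdot> (\<alpha> X ((X \<odot> A) \<odot> X) A \<cdot>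
          (((idm X \<otimes> copy_fst X A) \<otimes> idm A) \<cdot> (((\<alpha> X X A \<cdot> (copy X \<otimes> idm A)) \<otimes> idm A) \<cdot> k)))"
    using k by (simp add: interchange_simps copy_swap_after_copy)
  also have "\<dots> = (idm X \<otimes> \<alpha> (X \<odot> A) X A) \<cdot> ((idm X \<otimes> (copy_fst X A \<otimes> idm A)) \<cdot>
        (\<alpha> X (X \<odot> A) A \<cdot> (((\<alpha> X X A \<cdot> (copy X \<otimes> idm A)) \<otimes> idm A) \<cdot> k)))"
    using k assoc_naturality_comp[of "idm X" "copy_fst X A" "idm A"] by simp
  finally show ?thesis .
qed

lemma copy_fst_copy_snd_commute:
  assumes k: "arr k" "tgt k = X \<odot> A"
  shows "\<alpha> X (X \<odot> A) A \<cdot> (((\<alpha> X X A \<cdot> (copy X \<otimes> idm A)) \<otimes> idm A) \<cdot> (\<alpha>' X A A \<cdot> ((idm X \<otimes> copy A) \<cdot> k)))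
    = (idm X \<otimes> \<alpha>' X A A) \<cdot> ((idm X \<otimes> (idm X \<otimes> copy A)) \<cdot> (\<alpha> X X A \<cdot> ((copy X \<otimes> idm A) \<cdot> k)))"
proof -
  have pentagon': "\<alpha> X (X \<odot> A) A \<cdot> ((\<alpha> X X A \<otimes> idm A) \<cdot> k')
      = (idm X \<otimes> \<alpha>' X A A) \<cdot> (\<alpha> X X (A \<odot> A) \<cdot> (\<alpha> (X \<odot> X) A A \<cdot> k'))"
    if "arr k'" "tgt k' = ((X \<odot> X) \<odot> A) \<odot> A" for k'
  proof -
    have "(idm X \<otimes> \<alpha>' X A A) \<cdot> ((idm X \<otimes> \<alpha> X A A) \<cdot> k'') = k''"
      if "arr k''" "tgt k'' = X \<odot> ((X \<odot> A) \<odot> A)" for k''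
      using that by (simp add: interchange_simps)
    then show ?thesis using that by (simp add: pentagon_comp)
  qed
  have tensor_comp_split: "((\<alpha> X X A \<cdot> (copy X \<otimes> idm A)) \<otimes> idm A) \<cdot> k'
      = (\<alpha> X X A \<otimes> idm A) \<cdot> (((copy X \<otimes> idm A) \<otimes> idm A) \<cdot> k')"
    if "arr k'" "tgt k' = (X \<odot> A) \<odot> A" for k'
    using that by (simp add: interchange_simps)
  have "\<alpha> X (X \<odot> A) A \<cdot> (((\<alpha> X X A \<cdot> (copy X \<otimes> idm A)) \<otimes> idm A) \<cdot> (\<alpha>' X A A \<cdot> ((idm X \<otimes> copy A) \<cdot> k)))
      = (idm X \<otimes> \<alpha>' X A A) \<cdot> (\<alpha> X X (A \<odot> A) \<cdot>
          (\<alpha> (X \<odot> X) A A \<cdot> (((copy X \<otimes> idm A) \<otimes> idm A) \<cdot> (\<alpha>' X A A \<cdot> ((idm X \<otimes> copy A) \<cdot> k)))))"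
    using k by (simp add: tensor_comp_split pentagon')
  also have "\<dots> = (idm X \<otimes> \<alpha>' X A A) \<cdot> (\<alpha> X X (A \<odot> A) \<cdot> ((copy X \<otimes> idm (A \<odot> A)) \<cdot> ((idm X \<otimes> copy A) \<cdot> k)))"
    using k assoc_naturality_comp[of "copy X" "idm A" "idm A" "\<alpha>' X A A \<cdot> ((idm X \<otimes> copy A) \<cdot> k)"] by simp
  also have "\<dots> = (idm X \<otimes> \<alpha>' X A A) \<cdot> (\<alpha> X X (A \<odot> A) \<cdot> ((idm (X \<odot> X) \<otimes> copy A) \<cdot> ((copy X \<otimes> idm A) \<cdot> k)))"
    using k by (simp add: interchange_simps)
  also have "\<dots> = (idm X \<otimes> \<alpha>' X A A) \<cdot> ((idm X \<otimes> (idm X \<otimes> copy A)) \<cdot> (\<alpha> X X A \<cdot> ((copy X \<otimes> idm A) \<cdot> k)))"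
    using k assoc_naturality_comp[of "idm X" "idm X" "copy A" "(copy X \<otimes> idm A) \<cdot> k"] by simp
  finally show ?thesis .
qed

lemma rewire_copy:
  assumes k: "arr k" "tgt k = X \<odot> A"
  shows "rewire X A (X \<odot> A) \<cdot> (((\<alpha> X X A \<cdot> (copy X \<otimes> idm A)) \<otimes> idm A) \<cdot> (\<alpha>' X A A \<cdot> ((idm X \<otimes> copy A) \<cdot> k)))
    = (idm X \<otimes> copy (X \<odot> A)) \<cdot> (\<alpha> X X A \<cdot> ((copy X \<otimes> idm A) \<cdot> k))"
proof -
  have "rewire X A (X \<odot> A) \<cdot> (((\<alpha> X X A \<cdot> (copy X \<otimes> idm A)) \<otimes> idm A) \<cdot> (\<alpha>' X A A \<cdot> ((idm X \<otimes> copy A) \<cdot> k)))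
      = (idm X \<otimes> \<alpha> (X \<odot> A) X A) \<cdot> ((idm X \<otimes> (copy_fst X A \<otimes> idm A)) \<cdot> ((idm X \<otimes> \<alpha>' X A A) \<cdot>
          ((idm X \<otimes> (idm X \<otimes> copy A)) \<cdot> (\<alpha> X X A \<cdot> ((copy X \<otimes> idm A) \<cdot> k)))))"
    using k by (simp add: rewire_after_copy_fst copy_fst_copy_snd_commute del: comp_assoc_arr)
  also have "\<dots> = (idm X \<otimes> copy (X \<odot> A)) \<cdot> (\<alpha> X X A \<cdot> ((copy X \<otimes> idm A) \<cdot> k))"
    using k by (simp add: interchange_simps copy_tensor_eq)
  finally show ?thesis .
qed

lemma io_dil_copy_input:
  assumes p: "arr p" "src p = A" "tgt p = X"
  shows "(io_dil X A p \<otimes> idm A) \<cdot> copy A = ((\<alpha> X X A \<cdot> (copy X \<otimes> idm A)) \<otimes> idm A) \<cdot> (\<alpha>' X A A \<cdot> ((idm X \<otimes> copy A) \<cdot> ((p \<otimes> idm A) \<cdot> copy A)))"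
proof -
  have split_io_dil: "(io_dil X A p \<otimes> idm A) \<cdot> copy A = ((\<alpha> X X A \<cdot> (copy X \<otimes> idm A)) \<otimes> idm A) \<cdot> ((((p \<otimes> idm A) \<cdot> copy A) \<otimes> idm A) \<cdot> copy A)"
    using p by (simp add: interchange_simps)
  have split_copy: "(((p \<otimes> idm A) \<cdot> copy A) \<otimes> idm A) \<cdot> copy A = ((p \<otimes> idm A) \<otimes> idm A) \<cdot> ((copy A \<otimes> idm A) \<cdot> copy A)"
    using p by (simp add: interchange_simps)
  have coassoc_inv: "(copy A \<otimes> idm A) \<cdot> copy A = \<alpha>' A A A \<cdot> ((idm A \<otimes> copy A) \<cdot> copy A)"
  proof -
    have "\<alpha>' A A A \<cdot> (\<alpha> A A A \<cdot> ((copy A \<otimes> idm A) \<cdot> copy A)) = \<alpha>' A A A \<cdot> ((idm A \<otimes> copy A) \<cdot> copy A)"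
      by (simp only: coassoc)
    then show ?thesis by simp
  qed
  have assoc_inv_natural: "((p \<otimes> idm A) \<otimes> idm A) \<cdot> (\<alpha>' A A A \<cdot> k) = \<alpha>' X A A \<cdot> ((p \<otimes> idm (A \<odot> A)) \<cdot> k)"
    if "arr k" "tgt k = A \<odot> (A \<odot> A)" for k
    using that p assoc_inv_naturality_comp[of p "idm A" "idm A" k] by simp
  have copy_natural: "(p \<otimes> idm (A \<odot> A)) \<cdot> ((idm A \<otimes> copy A) \<cdot> copy A) = (idm X \<otimes> copy A) \<cdot> ((p \<otimes> idm A) \<cdot> copy A)"
    using p by (simp add: interchange_simps)
  show ?thesis using p by (simp only: split_io_dil split_copy coassoc_inv assoc_inv_natural copy_natural arr_copy arr_id arr_tensor arr_comp src_tensor tgt_tensor tgt_comp src_comp)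
qed

lemma copy_after_io_dil:
  assumes p: "arr p" "src p = A" "tgt p = X"
  shows "(idm X \<otimes> copy (X \<odot> A)) \<cdot> io_dil X A p = rewire X A (X \<odot> A) \<cdot> ((io_dil X A p \<otimes> idm A) \<cdot> copy A)"
proof -
  have "rewire X A (X \<odot> A) \<cdot> ((io_dil X A p \<otimes> idm A) \<cdot> copy A) =
     rewire X A (X \<odot> A) \<cdot> (((\<alpha> X X A \<cdot> (copy X \<otimes> idm A)) \<otimes> idm A) \<cdot> (\<alpha>' X A A \<cdot> ((idm X \<otimes> copy A) \<cdot> ((p \<otimes> idm A) \<cdot> copy A))))"
    using p by (simp only: io_dil_copy_input)
  also have "\<dots> = (idm X \<otimes> copy (X \<odot> A)) \<cdot> io_dil X A p"
    using p rewire_copy[of "(p \<otimes> idm A) \<cdot> copy A" X A] by simp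
  finally show ?thesis by simp
qed

lemma graph_after_io_dil:
  assumes p: "arr p" "src p = A" "tgt p = X" and u: "arr u" "src u = X \<odot> A" "tgt u = Y"
  shows "(idm X \<otimes> graph_arr (X \<odot> A) u) \<cdot> io_dil X A p = rewire X A Y \<cdot> ((((idm X \<otimes> u) \<cdot> io_dil X A p) \<otimes> idm A) \<cdot> copy A)"
proof -
  have "(idm X \<otimes> graph_arr (X \<odot> A) u) \<cdot> io_dil X A p = (idm X \<otimes> (u \<otimes> idm (X \<odot> A))) \<cdot> ((idm X \<otimes> copy (X \<odot> A)) \<cdot> io_dil X A p)"
    using p u by (simp add: interchange_simps)
  also have "\<dots> = (idm X \<otimes> (u \<otimes> idm (X \<odot> A))) \<cdot> (rewire X A (X \<odot> A) \<cdot> ((io_dil X A p \<otimes> idm A) \<cdot> copy A))"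
    using p by (simp only: copy_after_io_dil)
  also have "\<dots> = rewire X A Y \<cdot> (((idm X \<otimes> u) \<otimes> idm A) \<cdot> ((io_dil X A p \<otimes> idm A) \<cdot> copy A))"
    using p u rewire_naturality[of u "X \<odot> A" Y "(io_dil X A p \<otimes> idm A) \<cdot> copy A" X A] by simp
  also have "\<dots> = rewire X A Y \<cdot> ((((idm X \<otimes> u) \<cdot> io_dil X A p) \<otimes> idm A) \<cdot> copy A)"
    using p u by (simp add: interchange_simps)
  finally show ?thesis .
qed

lemma io_dil_graph_eq:
  assumes p: "arr p" "src p = A" "tgt p = X"
    and u1: "arr u1" "src u1 = X \<odot> A" "tgt u1 = Y"
    and u2: "arr u2" "src u2 = X \<odot> A" "tgt u2 = Y"
    and eq: "(idm X \<otimes> u1) \<cdot> io_dil X A p = (idm X \<otimes> u2) \<cdot> io_dil X A p"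
  shows "(idm X \<otimes> graph_arr (X \<odot> A) u1) \<cdot> io_dil X A p = (idm X \<otimes> graph_arr (X \<odot> A) u2) \<cdot> io_dil X A p"
  using graph_after_io_dil[OF p u1] graph_after_io_dil[OF p u2] eq by simp

lemma conditional_factors_through_io_dil:
  assumes "conditional C f A X Y g"
  shows "f = (idm X \<otimes> g) \<cdot> io_dil X A (marg C f X Y)"
  using assms unfolding conditional_def by simp

lemma marginal_of_assoc_factor:
  assumes rho: "arr \<rho>" "tgt \<rho> = (X \<odot> E) \<odot> F"
    and k: "arr k" "tgt k = E \<odot> F"
    and pi: "arr \<pi>" "tgt \<pi> = X \<odot> src k"
    and factor: "\<alpha> X E F \<cdot> \<rho> = (idm X \<otimes> k) \<cdot> \<pi>"
  shows "(idm X \<otimes> (runit E \<cdot> ((idm E \<otimes> del F) \<cdot> k))) \<cdot> \<pi>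
    = runit (X \<odot> E) \<cdot> ((idm (X \<odot> E) \<otimes> del F) \<cdot> \<rho>)"
proof -
  have "(idm X \<otimes> (runit E \<cdot> ((idm E \<otimes> del F) \<cdot> k))) \<cdot> \<pi>
      = (idm X \<otimes> runit E) \<cdot> ((idm X \<otimes> (idm E \<otimes> del F)) \<cdot> ((idm X \<otimes> k) \<cdot> \<pi>))"
    using k pi by (simp add: interchange_simps)
  also have "\<dots> = (idm X \<otimes> runit E) \<cdot> ((idm X \<otimes> (idm E \<otimes> del F)) \<cdot> (\<alpha> X E F \<cdot> \<rho>))"
    by (simp only: factor)
  also have "\<dots> = (idm X \<otimes> runit E) \<cdot> (\<alpha> X E I \<cdot> ((idm (X \<odot> E) \<otimes> del F) \<cdot> \<rho>))"
    using assoc_naturality_comp[of "idm X" "idm E" "del F" \<rho>] rho by simp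
  also have "\<dots> = runit (X \<odot> E) \<cdot> ((idm (X \<odot> E) \<otimes> del F) \<cdot> \<rho>)"
    using runit_tensor[of X E] rho by (simp flip: comp_assoc_arr)
  finally show ?thesis .
qed

lemma push_dilation_through_graph:
  assumes p: "arr p" "src p = A" "tgt p = X"
    and rho: "arr \<rho>" "src \<rho> = A" "tgt \<rho> = (X \<odot> (X \<odot> A)) \<odot> F"
    and kE: "arr kE" "src kE = X \<odot> A" "tgt kE = X \<odot> A"
    and m: "arr m" "src m = (X \<odot> A) \<odot> (X \<odot> A)" "tgt m = F"
    and factor: "\<alpha> X (X \<odot> A) F \<cdot> \<rho> = (idm X \<otimes> ((idm (X \<odot> A) \<otimes> m) \<cdot> io_dil (X \<odot> A) (X \<odot> A) kE)) \<cdot> io_dil X A p"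
    and kE_fix: "(idm X \<otimes> kE) \<cdot> io_dil X A p = io_dil X A p"
    and g: "arr g" "src g = X \<odot> A" "tgt g = E'"
  shows "((idm X \<otimes> g) \<otimes> idm F) \<cdot> \<rho>
    = \<alpha>' X E' F \<cdot> ((idm X \<otimes> (idm E' \<otimes> (m \<cdot> copy (X \<odot> A)))) \<cdot> ((idm X \<otimes> graph_arr (X \<odot> A) g) \<cdot> io_dil X A p))"
proof -
  let ?E = "X \<odot> A"
  let ?W = "(g \<otimes> idm F) \<cdot> ((idm ?E \<otimes> m) \<cdot> (\<alpha> ?E ?E ?E \<cdot> (copy ?E \<otimes> idm ?E)))"
  have assoc_natural: "\<alpha> X E' F \<cdot> (((idm X \<otimes> g) \<otimes> idm F) \<cdot> \<rho>) = (idm X \<otimes> (g \<otimes> idm F)) \<cdot> (\<alpha> X ?E F \<cdot> \<rho>)"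
    using assoc_naturality_comp[of "idm X" g "idm F" \<rho>] g rho by simp
  have "((idm X \<otimes> g) \<otimes> idm F) \<cdot> \<rho> = \<alpha>' X E' F \<cdot> (\<alpha> X E' F \<cdot> (((idm X \<otimes> g) \<otimes> idm F) \<cdot> \<rho>))"
    using g rho by simp
  also have "\<dots> = \<alpha>' X E' F \<cdot> ((idm X \<otimes> (g \<otimes> idm F)) \<cdot> ((idm X \<otimes> ((idm ?E \<otimes> m) \<cdot> io_dil ?E ?E kE)) \<cdot> io_dil X A p))"
    by (simp only: assoc_natural factor)
  also have "(idm X \<otimes> (g \<otimes> idm F)) \<cdot> ((idm X \<otimes> ((idm ?E \<otimes> m) \<cdot> io_dil ?E ?E kE)) \<cdot> io_dil X A p)
      = (idm X \<otimes> ?W) \<cdot> ((idm X \<otimes> graph_arr ?E kE) \<cdot> io_dil X A p)"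
    using p g kE m by (simp add: interchange_simps)
  also have "(idm X \<otimes> graph_arr ?E kE) \<cdot> io_dil X A p = (idm X \<otimes> copy ?E) \<cdot> io_dil X A p"
    using io_dil_graph_eq[OF p kE, of "idm ?E"] p kE_fix by simp
  also have "(idm X \<otimes> ?W) \<cdot> ((idm X \<otimes> copy ?E) \<cdot> io_dil X A p)
      = (idm X \<otimes> (idm E' \<otimes> (m \<cdot> copy ?E))) \<cdot> ((idm X \<otimes> graph_arr ?E g) \<cdot> io_dil X A p)"
    using p g m by (simp add: interchange_simps coassoc)
  finally show ?thesis .
qed

lemma io_dil_dil_equal:
  assumes hc: "has_conditionals C"
    and p: "arr p" "src p = A" "tgt p = X"
    and g1: "arr g1" "src g1 = X \<odot> A" "tgt g1 = E'"
    and g2: "arr g2" "src g2 = X \<odot> A" "tgt g2 = E'"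
    and eq: "(idm X \<otimes> g1) \<cdot> io_dil X A p = (idm X \<otimes> g2) \<cdot> io_dil X A p"
  shows "dil_equal C (io_dil X A p) A X (X \<odot> A) g1 g2"
  unfolding dil_equal_def
proof (intro allI impI)
  fix F \<rho>
  assume dil: "dilation C (io_dil X A p) A (X \<odot> (X \<odot> A)) F \<rho>"
  let ?E = "X \<odot> A"
  have rho: "arr \<rho>" "src \<rho> = A" "tgt \<rho> = (X \<odot> ?E) \<odot> F"
    using dil unfolding dilation_def hom_iff by auto
  have rho_marg: "runit (X \<odot> ?E) \<cdot> ((idm (X \<odot> ?E) \<otimes> del F) \<cdot> \<rho>) = io_dil X A p"
    using dil unfolding dilation_def by auto
  have "\<alpha> X ?E F \<cdot> \<rho> \<in> hom C A (X \<odot> (?E \<odot> F))" using rho by (simp add: hom_iff)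
  then obtain k where kc: "conditional C (\<alpha> X ?E F \<cdot> \<rho>) A X (?E \<odot> F) k"
    using hc unfolding has_conditionals_def by blast
  have k: "arr k" "src k = ?E" "tgt k = ?E \<odot> F"
    using kc unfolding conditional_def hom_iff by auto
  have "marg C (\<alpha> X ?E F \<cdot> \<rho>) X (?E \<odot> F) = p"
    using rho rho_marg io_dil_marginal[OF p] by (simp add: marg_def marginal_assoc)
  then have k_factor: "\<alpha> X ?E F \<cdot> \<rho> = (idm X \<otimes> k) \<cdot> io_dil X A p"
    using conditional_factors_through_io_dil[OF kc] by simp
  define kE where "kE = marg C k ?E F"
  have kE: "arr kE" "src kE = ?E" "tgt kE = ?E"
    unfolding kE_def marg_def using k by simp_all
  have kE_fix: "(idm X \<otimes> kE) \<cdot> io_dil X A p = io_dil X A p"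
    using marginal_of_assoc_factor[OF rho(1,3) k(1,3) _ _ k_factor] k p rho_marg
    unfolding kE_def marg_def by simp
  have "k \<in> hom C ?E (?E \<odot> F)" using k by (simp add: hom_iff)
  then obtain m where mc: "conditional C k ?E ?E F m"
    using hc unfolding has_conditionals_def by blast
  have m: "arr m" "src m = ?E \<odot> ?E" "tgt m = F"
    using mc unfolding conditional_def hom_iff by auto
  have factor: "\<alpha> X ?E F \<cdot> \<rho> = (idm X \<otimes> ((idm ?E \<otimes> m) \<cdot> io_dil ?E ?E kE)) \<cdot> io_dil X A p"
    using k_factor conditional_factors_through_io_dil[OF mc] unfolding kE_def by simp
  show "((idm X \<otimes> g1) \<otimes> idm F) \<cdot> \<rho> = ((idm X \<otimes> g2) \<otimes> idm F) \<cdot> \<rho>"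
    using push_dilation_through_graph[OF p rho kE m factor kE_fix g1]
      push_dilation_through_graph[OF p rho kE m factor kE_fix g2]
      io_dil_graph_eq[OF p g1 g2 eq] by simp
qed

lemma io_dil_initial:
  assumes hc: "has_conditionals C" and p: "p \<in> hom C A X"
  shows "initial_dilation C p A X (X \<odot> A) (io_dil X A p)"
  unfolding initial_dilation_def
proof (intro conjI allI impI)
  have p': "arr p" "src p = A" "tgt p = X" using p by (auto simp: hom_iff)
  show "dilation C p A X (X \<odot> A) (io_dil X A p)"
    unfolding dilation_def using p' io_dil_marginal[OF p'] by (simp add: hom_iff)
  fix E' \<pi>'
  assume "dilation C p A X E' \<pi>'"
  then have "\<pi>' \<in> hom C A (X \<odot> E')" and "marg C \<pi>' X E' = p"
    unfolding dilation_def marg_def by auto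
  then obtain f where fc: "conditional C \<pi>' A X E' f"
    using hc unfolding has_conditionals_def by blast
  have f: "f \<in> hom C (X \<odot> A) E'" using fc unfolding conditional_def by auto
  have f_factor: "(idm X \<otimes> f) \<cdot> io_dil X A p = \<pi>'"
    using conditional_factors_through_io_dil[OF fc] \<open>marg C \<pi>' X E' = p\<close> by simp
  have "dil_equal C (io_dil X A p) A X (X \<odot> A) f g"
    if "g \<in> hom C (X \<odot> A) E'" "(idm X \<otimes> g) \<cdot> io_dil X A p = \<pi>'" for g
    using io_dil_dil_equal[OF hc p'] f that f_factor by (simp add: hom_iff)
  then show "\<exists>f \<in> hom C (X \<odot> A) E'. (idm X \<otimes> f) \<cdot> io_dil X A p = \<pi>' \<and>
      (\<forall>g \<in> hom C (X \<odot> A) E'. (idm X \<otimes> g) \<cdot> io_dil X A p = \<pi>' \<longrightarrow>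
         dil_equal C (io_dil X A p) A X (X \<odot> A) f g)"
    using f f_factor by blast
qed

end

theorem proposition4p13:
  fixes C :: "('o, 'm) mcat"
  assumes "markov_category C"
    and "has_conditionals C"
  shows "\<forall>A X p. p \<in> hom C A X \<longrightarrow> (\<exists>E \<pi>. initial_dilation C p A X E \<pi>)"
proof (intro allI impI)
  fix A X p
  assume "p \<in> hom C A X"
  interpret markov_category C by fact
  show "\<exists>E \<pi>. initial_dilation C p A X E \<pi>"
    using io_dil_initial[OF assms(2) \<open>p \<in> hom C A X\<close>] by blast
qed

end
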